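(* The family of inequalities $$\sum_{k\in[n]}-p_{k0,1}+\sum_{k\in T}(p_{k1,0}-p_{k1,1})\le 0\ (\emptyset\ne T\subseteq\{0,\dots,n-2\}),\quad \sum_{k\in[n]}-p_{k1,0}+\sum_{k\in T}(p_{k0,1}-p_{k0,0})\le 0\ (\emptyset\ne T\subsetneq[n]),$$ $$\sum_{k\in[n]}-p_{k0,0}+\sum_{k\in T}(p_{k1,1}-p_{k1,0})\le 0\ (\emptyset\ne T\subseteq\{0,\dots,n-2\}),$$ which characterizes the observed laws compatible with the IV model when $\ell=2$, consists of exactly $2^{n+1}-4$ sharp inequalities: none of them can be removed, i.e. for each inequality of the family there exists an observed law $\mathcal P$ (with $\mathcal P(Z=0),\mathcal P(Z=1)>0$) satisfying all other inequalities of the family but violating that one.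
   Context: $D\in\{0,1\}$ treatment; $Y$ outcome with values $\gamma_0<\dots<\gamma_{n-1}$; instrument $Z\in\{0,1\}$; $[n]=\{0,\dots,n-1\}$; $p_{yd,z}=\mathcal P(Y=\gamma_y,D=d\mid Z=z)$ for an observed law $\mathcal P$ of $(Y,D,Z)$. The IV model: potential outcomes $Y^{(d,z)}$ and treatments $D^{(z)}$ with exclusion $Y^{(d,0)}=Y^{(d,1)}$ a.s. (written $Y^{(d)}$), random assignment $Z\perp(Y^{(0)},Y^{(1)},D^{(0)},D^{(1)})$, and consistency $Y=(1-D)Y^{(0)}+DY^{(1)}$, $D=\mathbb 1(Z=0)D^{(0)}+\mathbb 1(Z=1)D^{(1)}$; $\mathcal P$ is compatible if it is induced by such a full data law. *)

theory Defs
  imports Complex_Main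
begin

text \<open>An observed law of (Y,D,Z): a joint probability mass function q y d z
  = P(Y = gamma_y, D = d, Z = z) with y < n, d,z in {0,1}, and P(Z=0), P(Z=1) > 0.\<close>

definition observed_law :: "nat \<Rightarrow> (nat \<Rightarrow> nat \<Rightarrow> nat \<Rightarrow> real) \<Rightarrow> bool" where
  "observed_law n q \<longleftrightarrow>
     (\<forall>y d z. 0 \<le> q y d z) \<and>
     (\<forall>y d z. (y \<ge> n \<or> d > 1 \<or> z > 1) \<longrightarrow> q y d z = 0) \<and>
     (\<Sum>y<n. \<Sum>d<2. \<Sum>z<2. q y d z) = 1 \<and>
     (\<forall>z<2. 0 < (\<Sum>y<n. \<Sum>d<2. q y d z))"

definition probZ :: "nat \<Rightarrow> (nat \<Rightarrow> nat \<Rightarrow> nat \<Rightarrow> real) \<Rightarrow> nat \<Rightarrow> real" where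
  "probZ n q z = (\<Sum>y<n. \<Sum>d<2. q y d z)"

text \<open>p_{yd,z} = P(Y = gamma_y, D = d | Z = z)\<close>
definition condp :: "nat \<Rightarrow> (nat \<Rightarrow> nat \<Rightarrow> nat \<Rightarrow> real) \<Rightarrow> nat \<Rightarrow> nat \<Rightarrow> nat \<Rightarrow> real" where
  "condp n q y d z = q y d z / probZ n q z"

datatype ineq = Ineq1 "nat set" | Ineq2 "nat set" | Ineq3 "nat set"

text \<open>The index set of the family; {0,...,n-2} is written {..<n-1}.\<close>
definition family :: "nat \<Rightarrow> ineq set" where
  "family n =
     {Ineq1 T | T. T \<noteq> {} \<and> T \<subseteq> {..<n-1}} \<union>
     {Ineq2 T | T. T \<noteq> {} \<and> T \<subset> {..<n}} \<union>
     {Ineq3 T | T. T \<noteq> {} \<and> T \<subseteq> {..<n-1}}"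

text \<open>Left-hand side of each inequality (the inequality reads lhs \<le> 0),
  for given conditional probabilities p y d z = p_{yd,z}.\<close>
fun ineq_lhs :: "nat \<Rightarrow> ineq \<Rightarrow> (nat \<Rightarrow> nat \<Rightarrow> nat \<Rightarrow> real) \<Rightarrow> real" where
  "ineq_lhs n (Ineq1 T) p = (\<Sum>k<n. - p k 0 1) + (\<Sum>k\<in>T. p k 1 0 - p k 1 1)"
| "ineq_lhs n (Ineq2 T) p = (\<Sum>k<n. - p k 1 0) + (\<Sum>k\<in>T. p k 0 1 - p k 0 0)"
| "ineq_lhs n (Ineq3 T) p = (\<Sum>k<n. - p k 0 0) + (\<Sum>k\<in>T. p k 1 1 - p k 1 0)"

end

theory Submission
  imports Defs
begin

text \<open>The family consists of two copies of the nonempty subsets of \<open>{0,...,n-2}\<close> and of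
  the nonempty proper subsets of \<open>[n]\<close>, which gives the count.

  Each inequality of the family says that, for some three of the four columns
  \<open>k \<mapsto> p(k,d,z)\<close> of the table, the sum over \<open>T\<close> of (plus - minus) is at most the total
  of the base column. To violate only the one with index set \<open>T0\<close>, let \<open>m = |T0|\<close>,
  \<open>g = 1/n\<close>, and put mass \<open>g\<close> on \<open>T0\<close> in the plus column, mass \<open>g\<close> off \<open>T0\<close> in the
  minus column and mass \<open>(m - 1/2) g\<close> in the base column. For \<open>T \<noteq> T0\<close> the sum over
  \<open>T\<close> is at most \<open>(|T \<inter> T0| - |T - T0|) g \<le> (m - 1) g\<close>, below the base total, while for
  \<open>T0\<close> it is \<open>m g\<close>.
  The fourth column, together with some extra mass at a point \<open>l \<notin> T0\<close>, completes both
  halves of the table to probability vectors; the remaining two groups of inequalities then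
  hold by crude bounds, and a uniform \<open>Z\<close> turns the table into an observed law. The same
  four columns, arranged differently, serve all three groups.\<close>

lemma mem_familyE:
  assumes "j \<in> family n"
  obtains (Ineq1) T where "j = Ineq1 T" "T \<noteq> {}" "T \<subseteq> {..<n-1}"
    | (Ineq2) T where "j = Ineq2 T" "T \<noteq> {}" "T \<subset> {..<n}"
    | (Ineq3) T where "j = Ineq3 T" "T \<noteq> {}" "T \<subseteq> {..<n-1}"
  using assms unfolding family_def by blast

lemma card_nonempty_subsets:
  assumes "finite S"
  shows "int (card {T. T \<noteq> {} \<and> T \<subseteq> S}) = 2 ^ card S - 1"
proof -
  have "{T. T \<noteq> {} \<and> T \<subseteq> S} = Pow S - {{}}" by auto
  then show ?thesis using assms by (simp add: card_Diff_singleton card_Pow of_nat_diff)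
qed

lemma card_nonempty_proper_subsets:
  assumes "finite S" "S \<noteq> {}"
  shows "int (card {T. T \<noteq> {} \<and> T \<subset> S}) = 2 ^ card S - 2"
proof -
  have "{T. T \<noteq> {} \<and> T \<subset> S} = Pow S - {{}, S}" by auto
  moreover have "card {{}, S} = 2" using assms(2) by simp
  moreover have "(2::nat) \<le> 2 ^ card S"
    using assms by (simp add: Suc_leI card_gt_0_iff self_le_power)
  ultimately show ?thesis using assms(1) by (simp add: card_Diff_subset card_Pow of_nat_diff)
qed

lemma card_family:
  assumes "n \<ge> 1"
  shows "int (card (family n)) = 2 ^ (n + 1) - 4"
proof -
  define A where "A = {T. T \<noteq> {} \<and> T \<subseteq> {..<n-1}}"
  define B where "B = {T. T \<noteq> {} \<and> T \<subset> {..<n}}"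
  have "finite A" unfolding A_def by (rule finite_subset[of _ "Pow {..<n-1}"]) auto
  have "finite B" unfolding B_def by (rule finite_subset[of _ "Pow {..<n}"]) auto
  have "family n = (Ineq1 ` A \<union> Ineq2 ` B) \<union> Ineq3 ` A"
    unfolding family_def A_def B_def by blast
  also have "card \<dots> = card (Ineq1 ` A \<union> Ineq2 ` B) + card (Ineq3 ` A)"
    using \<open>finite A\<close> \<open>finite B\<close> by (intro card_Un_disjoint) auto
  also have "card (Ineq1 ` A \<union> Ineq2 ` B) = card (Ineq1 ` A) + card (Ineq2 ` B)"
    using \<open>finite A\<close> \<open>finite B\<close> by (intro card_Un_disjoint) auto
  finally have "int (card (family n)) = int (card A) + int (card B) + int (card A)"
    by (simp add: card_image inj_on_def)
  moreover have "int (card A) = 2 ^ (n - 1) - 1" unfolding A_def by (simp add: card_nonempty_subsets)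
  moreover have "int (card B) = 2 ^ n - 2" unfolding B_def
    using card_nonempty_proper_subsets[of "{..<n}"] assms by (simp add: lessThan_empty_iff)
  moreover have "(2::int) ^ n = 2 * 2 ^ (n - 1)" using assms by (cases n) simp_all
  moreover have "(2::int) ^ (n + 1) = 2 * 2 ^ n" by simp
  ultimately show ?thesis by linarith
qed

lemma card_Int_less_card_add_card_Diff:
  assumes "finite A" "finite B" "A \<noteq> B"
  shows "card (A \<inter> B) < card B + card (A - B)"
proof (cases "A - B = {}")
  case True
  then have "A \<subset> B" using assms(3) by blast
  then have "card A < card B" using assms(2) by (simp add: psubset_card_mono)
  then show ?thesis using \<open>A \<subset> B\<close> by (simp add: Int_absorb2)
next
  case False
  then have "0 < card (A - B)" using assms(1) by (simp add: card_gt_0_iff)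
  moreover have "card (A \<inter> B) \<le> card B" using assms(2) by (simp add: card_mono)
  ultimately show ?thesis by linarith
qed

lemma sum_signed_indicator_le:
  fixes g :: real
  assumes "finite A" "finite B" "A \<noteq> B" "0 \<le> g"
  shows "(\<Sum>k\<in>A. if k \<in> B then g else - g) \<le> g * (real (card B) - 1)"
proof -
  have "(\<Sum>k\<in>A. if k \<in> B then g else - g) = g * (real (card (A \<inter> B)) - card (A - B))"
    using assms(1) by (simp add: sum.If_cases Diff_eq algebra_simps)
  also have "\<dots> \<le> g * (real (card B) - 1)"
    using card_Int_less_card_add_card_Diff[OF assms(1-3)] assms(4)
    by (intro mult_left_mono) linarith+
  finally show ?thesis .
qed

lemma sum_diff_le_sum_superset:
  fixes f h :: "'a \<Rightarrow> real"
  assumes "finite A" "T \<subseteq> A" "\<And>k. k \<in> A \<Longrightarrow> 0 \<le> f k" "\<And>k. k \<in> T \<Longrightarrow> 0 \<le> h k"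
  shows "(\<Sum>k\<in>T. f k - h k) \<le> sum f A"
proof -
  have "(\<Sum>k\<in>T. f k - h k) \<le> sum f T" using assms(4) by (intro sum_mono) simp
  also have "\<dots> \<le> sum f A" using assms by (intro sum_mono2) auto
  finally show ?thesis .
qed

definition cond_table ::
    "nat \<Rightarrow> (nat \<Rightarrow> real) \<Rightarrow> (nat \<Rightarrow> real) \<Rightarrow> (nat \<Rightarrow> real) \<Rightarrow> (nat \<Rightarrow> real) \<Rightarrow> nat \<Rightarrow> nat \<Rightarrow> nat \<Rightarrow> real"
  where "cond_table n p00 p10 p01 p11 y d z =
    (if n \<le> y \<or> 1 < d \<or> 1 < z then 0
     else if z = 0 then (if d = 0 then p00 y else p10 y)
     else (if d = 0 then p01 y else p11 y))"

lemma ineq_lhs_cond_table: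
  assumes "T \<subseteq> {..<n}"
  shows "ineq_lhs n (Ineq1 T) (cond_table n p00 p10 p01 p11) = (\<Sum>k\<in>T. p10 k - p11 k) - sum p01 {..<n}"
    and "ineq_lhs n (Ineq2 T) (cond_table n p00 p10 p01 p11) = (\<Sum>k\<in>T. p01 k - p00 k) - sum p10 {..<n}"
    and "ineq_lhs n (Ineq3 T) (cond_table n p00 p10 p01 p11) = (\<Sum>k\<in>T. p11 k - p10 k) - sum p00 {..<n}"
  using assms by (auto simp: cond_table_def sum_negf intro!: sum.cong)

declare ineq_lhs.simps [simp del]

lemma sum_lessThan_2: "(\<Sum>d<(2::nat). f d) = f 0 + (f 1 :: real)"
  by (simp add: numeral_2_eq_2)

lemma observed_law_with_cond_table:
  assumes nonneg: "\<And>k. k < n \<Longrightarrow> 0 \<le> p00 k \<and> 0 \<le> p10 k \<and> 0 \<le> p01 k \<and> 0 \<le> p11 k"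
    and sum0: "sum p00 {..<n} + sum p10 {..<n} = 1"
    and sum1: "sum p01 {..<n} + sum p11 {..<n} = 1"
  shows "\<exists>q. observed_law n q \<and> condp n q = cond_table n p00 p10 p01 p11"
proof -
  let ?p = "cond_table n p00 p10 p01 p11"
  define q where "q y d z = ?p y d z / 2" for y d z
  have half: "probZ n q z = 1/2" if "z < 2" for z
  proof -
    have "probZ n q z = (\<Sum>y<n. ?p y 0 z + ?p y 1 z) / 2"
      by (simp add: probZ_def q_def sum_lessThan_2 sum_divide_distrib add_divide_distrib)
    also have "\<dots> = 1/2"
      using that sum0 sum1 by (cases z) (auto simp: cond_table_def sum.distrib)
    finally show ?thesis .
  qed
  have "observed_law n q"
    unfolding observed_law_def
  proof (intro conjI allI impI)
    show "0 \<le> q y d z" for y d z using nonneg by (auto simp: q_def cond_table_def)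
    show "q y d z = 0" if "n \<le> y \<or> 1 < d \<or> 1 < z" for y d z
      using that by (simp add: q_def cond_table_def)
    show "0 < (\<Sum>y<n. \<Sum>d<2. q y d z)" if "z < 2" for z
      using half[OF that] by (simp add: probZ_def)
    have "(\<Sum>y<n. \<Sum>d<2. \<Sum>z<2. q y d z) = probZ n q 0 + probZ n q 1"
      by (simp add: probZ_def sum_lessThan_2 sum.distrib)
    then show "(\<Sum>y<n. \<Sum>d<2. \<Sum>z<2. q y d z) = 1" using half by simp
  qed
  moreover have "condp n q = ?p"
  proof (intro ext)
    fix y d z
    show "condp n q y d z = ?p y d z"
    proof (cases "z < 2")
      case True
      then show ?thesis unfolding condp_def half[OF True] by (simp add: q_def)
    next
      case False
      then show ?thesis by (simp add: condp_def q_def cond_table_def)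
    qed
  qed
  ultimately show ?thesis by blast
qed

definition violates_only :: "nat \<Rightarrow> ineq \<Rightarrow> (nat \<Rightarrow> nat \<Rightarrow> nat \<Rightarrow> real) \<Rightarrow> bool" where
  "violates_only n i p \<longleftrightarrow>
     (\<forall>j\<in>family n. j \<noteq> i \<longrightarrow> ineq_lhs n j p \<le> 0) \<and> 0 < ineq_lhs n i p"

locale sharpness_gadget =
  fixes n :: nat and T0 :: "nat set" and l :: nat
  assumes T0_nonempty: "T0 \<noteq> {}" and T0_subset: "T0 \<subseteq> {..<n}"
    and l_less: "l < n" and l_notin_T0: "l \<notin> T0"
begin

definition plus_col :: "nat \<Rightarrow> real" where
  "plus_col k = (if k \<in> T0 then 1 / n else 0)"

definition minus_col :: "nat \<Rightarrow> real" where
  "minus_col k = (if k \<in> T0 then 0 else if k = l then 3 / (2 * n) else 1 / n)"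

definition base_col :: "nat \<Rightarrow> real" where
  "base_col k = (if k = l then (real (card T0) - 1 / 2) / n else 0)"

definition rest_col :: "nat \<Rightarrow> real" where
  "rest_col k = (if k = l then (real n - card T0) / n else 0)"

lemma n_pos: "0 < real n"
  using l_less by simp

lemma finite_T0: "finite T0"
  using T0_subset finite_subset by blast

lemma card_T0_bounds: "1 \<le> card T0" "card T0 < n"
proof -
  show "1 \<le> card T0" using T0_nonempty finite_T0 by (simp add: Suc_le_eq card_gt_0_iff)
  have "T0 \<subset> {..<n}" using T0_subset l_less l_notin_T0 by blast
  then show "card T0 < n" by (metis card_lessThan finite_lessThan psubset_card_mono)
qed

lemma cols_nonneg: "0 \<le> plus_col k" "0 \<le> minus_col k" "0 \<le> base_col k" "0 \<le> rest_col k"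
  using card_T0_bounds by (simp_all add: plus_col_def minus_col_def base_col_def rest_col_def)

lemma sum_plus_col: "sum plus_col {..<n} = card T0 / n"
  using T0_subset by (simp add: plus_col_def sum.If_cases Int_absorb1)

lemma sum_base_col: "sum base_col {..<n} = (real (card T0) - 1 / 2) / n"
  using l_less by (simp add: base_col_def)

lemma sum_rest_col: "sum rest_col {..<n} = (real n - card T0) / n"
  using l_less by (simp add: rest_col_def)

lemma sum_minus_col_off_l: "sum minus_col ({..<n} - {l}) = (real n - card T0 - 1) / n"
proof -
  have "sum minus_col ({..<n} - {l}) = (\<Sum>k\<in>{..<n} - insert l T0. 1 / n)"
    by (rule sum.mono_neutral_cong_right) (auto simp: minus_col_def)
  also have "\<dots> = card ({..<n} - insert l T0) / n" by simp
  also have "card ({..<n} - insert l T0) = n - (card T0 + 1)"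
    using T0_subset l_less l_notin_T0 finite_T0 by (simp add: card_Diff_subset)
  finally show ?thesis using card_T0_bounds by (simp add: of_nat_diff)
qed

lemma sum_minus_col: "sum minus_col {..<n} = (real n - card T0 + 1 / 2) / n"
proof -
  have "sum minus_col {..<n} = minus_col l + sum minus_col ({..<n} - {l})"
    using l_less by (simp add: sum.remove)
  also have "minus_col l = 3 / (2 * n)" using l_notin_T0 by (simp add: minus_col_def)
  finally show ?thesis using l_less by (simp add: sum_minus_col_off_l field_simps)
qed

lemma column_sums:
  "sum plus_col {..<n} + sum rest_col {..<n} = 1"
  "sum minus_col {..<n} + sum base_col {..<n} = 1"
  using n_pos by (simp_all add: sum_plus_col sum_rest_col sum_minus_col sum_base_col field_simps)

lemma sum_base_less_plus_minus_T0: "sum base_col {..<n} < (\<Sum>k\<in>T0. plus_col k - minus_col k)"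
proof -
  have "(\<Sum>k\<in>T0. plus_col k - minus_col k) = card T0 / n"
    by (simp add: plus_col_def minus_col_def)
  then show ?thesis using n_pos by (simp add: sum_base_col divide_strict_right_mono)
qed

lemma sum_plus_minus_le_base:
  assumes "T \<subseteq> {..<n}" "T \<noteq> T0"
  shows "(\<Sum>k\<in>T. plus_col k - minus_col k) \<le> sum base_col {..<n}"
proof -
  have "finite T" using assms(1) finite_subset by blast
  have "(\<Sum>k\<in>T. plus_col k - minus_col k) \<le> (\<Sum>k\<in>T. if k \<in> T0 then 1 / n else - (1 / n))"
    using n_pos by (intro sum_mono) (auto simp: plus_col_def minus_col_def field_simps)
  also have "\<dots> \<le> 1 / n * (real (card T0) - 1)"
    using \<open>finite T\<close> finite_T0 assms(2) by (intro sum_signed_indicator_le) auto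
  also have "\<dots> \<le> sum base_col {..<n}"
    using n_pos by (simp add: sum_base_col divide_right_mono)
  finally show ?thesis .
qed

lemma sum_base_rest_le_plus:
  assumes "T \<subseteq> {..<n}"
  shows "(\<Sum>k\<in>T. base_col k - rest_col k) \<le> sum plus_col {..<n}"
proof -
  have "(\<Sum>k\<in>T. base_col k - rest_col k) \<le> sum base_col {..<n}"
    using assms cols_nonneg by (intro sum_diff_le_sum_superset) auto
  also have "\<dots> \<le> sum plus_col {..<n}"
    using n_pos by (simp add: sum_base_col sum_plus_col divide_right_mono)
  finally show ?thesis .
qed

lemma sum_rest_base_le_minus:
  assumes "T \<subseteq> {..<n}"
  shows "(\<Sum>k\<in>T. rest_col k - base_col k) \<le> sum minus_col {..<n}"
proof -
  have "(\<Sum>k\<in>T. rest_col k - base_col k) \<le> sum rest_col {..<n}"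
    using assms cols_nonneg by (intro sum_diff_le_sum_superset) auto
  also have "\<dots> \<le> sum minus_col {..<n}"
    using n_pos by (simp add: sum_rest_col sum_minus_col divide_right_mono)
  finally show ?thesis .
qed

lemma sum_minus_plus_le_rest:
  assumes "T \<subseteq> {..<n}" "l \<notin> T"
  shows "(\<Sum>k\<in>T. minus_col k - plus_col k) \<le> sum rest_col {..<n}"
proof -
  have "(\<Sum>k\<in>T. minus_col k - plus_col k) \<le> sum minus_col ({..<n} - {l})"
    using assms cols_nonneg by (intro sum_diff_le_sum_superset) auto
  also have "\<dots> \<le> sum rest_col {..<n}"
    using n_pos by (simp add: sum_minus_col_off_l sum_rest_col divide_right_mono)
  finally show ?thesis .
qed

lemma observed_law_gadget:
  "\<exists>q. observed_law n q \<and> condp n q = cond_table n rest_col plus_col base_col minus_col"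
  "\<exists>q. observed_law n q \<and> condp n q = cond_table n minus_col base_col plus_col rest_col"
  "\<exists>q. observed_law n q \<and> condp n q = cond_table n base_col minus_col rest_col plus_col"
  using column_sums by (intro observed_law_with_cond_table; simp add: cols_nonneg; linarith)+

lemma violates_only_Ineq1:
  assumes "l = n - 1"
  shows "violates_only n (Ineq1 T0) (cond_table n rest_col plus_col base_col minus_col)"
  unfolding violates_only_def
proof (intro conjI ballI impI)
  fix j assume j: "j \<in> family n" "j \<noteq> Ineq1 T0"
  from j(1) show "ineq_lhs n j (cond_table n rest_col plus_col base_col minus_col) \<le> 0"
  proof (cases rule: mem_familyE)
    case (Ineq1 T)
    then have "T \<subseteq> {..<n}" by auto
    with Ineq1 show ?thesis using j(2) sum_plus_minus_le_base[of T] by (simp add: ineq_lhs_cond_table)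
  next
    case (Ineq2 T)
    then have "T \<subseteq> {..<n}" by auto
    with Ineq2 show ?thesis using sum_base_rest_le_plus[of T] by (simp add: ineq_lhs_cond_table)
  next
    case (Ineq3 T)
    then have "T \<subseteq> {..<n}" "l \<notin> T" using assms by auto
    with Ineq3 show ?thesis using sum_minus_plus_le_rest[of T] by (simp add: ineq_lhs_cond_table)
  qed
next
  show "0 < ineq_lhs n (Ineq1 T0) (cond_table n rest_col plus_col base_col minus_col)"
    using T0_subset sum_base_less_plus_minus_T0 by (simp add: ineq_lhs_cond_table)
qed

lemma violates_only_Ineq2:
  "violates_only n (Ineq2 T0) (cond_table n minus_col base_col plus_col rest_col)"
  unfolding violates_only_def
proof (intro conjI ballI impI)
  fix j assume j: "j \<in> family n" "j \<noteq> Ineq2 T0"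
  from j(1) show "ineq_lhs n j (cond_table n minus_col base_col plus_col rest_col) \<le> 0"
  proof (cases rule: mem_familyE)
    case (Ineq1 T)
    then have "T \<subseteq> {..<n}" by auto
    with Ineq1 show ?thesis using sum_base_rest_le_plus[of T] by (simp add: ineq_lhs_cond_table)
  next
    case (Ineq2 T)
    then have "T \<subseteq> {..<n}" by auto
    with Ineq2 show ?thesis using j(2) sum_plus_minus_le_base[of T] by (simp add: ineq_lhs_cond_table)
  next
    case (Ineq3 T)
    then have "T \<subseteq> {..<n}" by auto
    with Ineq3 show ?thesis using sum_rest_base_le_minus[of T] by (simp add: ineq_lhs_cond_table)
  qed
next
  show "0 < ineq_lhs n (Ineq2 T0) (cond_table n minus_col base_col plus_col rest_col)"
    using T0_subset sum_base_less_plus_minus_T0 by (simp add: ineq_lhs_cond_table)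
qed

lemma violates_only_Ineq3:
  assumes "l = n - 1"
  shows "violates_only n (Ineq3 T0) (cond_table n base_col minus_col rest_col plus_col)"
  unfolding violates_only_def
proof (intro conjI ballI impI)
  fix j assume j: "j \<in> family n" "j \<noteq> Ineq3 T0"
  from j(1) show "ineq_lhs n j (cond_table n base_col minus_col rest_col plus_col) \<le> 0"
  proof (cases rule: mem_familyE)
    case (Ineq1 T)
    then have "T \<subseteq> {..<n}" "l \<notin> T" using assms by auto
    with Ineq1 show ?thesis using sum_minus_plus_le_rest[of T] by (simp add: ineq_lhs_cond_table)
  next
    case (Ineq2 T)
    then have "T \<subseteq> {..<n}" by auto
    with Ineq2 show ?thesis using sum_rest_base_le_minus[of T] by (simp add: ineq_lhs_cond_table)
  next
    case (Ineq3 T)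
    then have "T \<subseteq> {..<n}" by auto
    with Ineq3 show ?thesis using j(2) sum_plus_minus_le_base[of T] by (simp add: ineq_lhs_cond_table)
  qed
next
  show "0 < ineq_lhs n (Ineq3 T0) (cond_table n base_col minus_col rest_col plus_col)"
    using T0_subset sum_base_less_plus_minus_T0 by (simp add: ineq_lhs_cond_table)
qed

end

lemma exists_observed_law_violating_only:
  assumes "i \<in> family n"
  shows "\<exists>q. observed_law n q \<and> violates_only n i (condp n q)"
  using assms
proof (cases rule: mem_familyE)
  case (Ineq1 T)
  then interpret sharpness_gadget n T "n - 1" by unfold_locales auto
  show ?thesis using Ineq1(1) observed_law_gadget(1) violates_only_Ineq1 by auto
next
  case (Ineq2 T)
  then obtain l where "l < n" "l \<notin> T" by blast
  with Ineq2 interpret sharpness_gadget n T l by unfold_locales auto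
  show ?thesis using Ineq2(1) observed_law_gadget(2) violates_only_Ineq2 by auto
next
  case (Ineq3 T)
  then interpret sharpness_gadget n T "n - 1" by unfold_locales auto
  show ?thesis using Ineq3(1) observed_law_gadget(3) violates_only_Ineq3 by auto
qed

theorem corollary3:
  fixes n :: nat
  assumes "n \<ge> 1"
  shows "int (card (family n)) = 2 ^ (n + 1) - 4 \<and>
         (\<forall>i \<in> family n. \<exists>q. observed_law n q \<and>
             (\<forall>j \<in> family n. j \<noteq> i \<longrightarrow> ineq_lhs n j (condp n q) \<le> 0) \<and>
             ineq_lhs n i (condp n q) > 0)"
  using card_family[OF assms] exists_observed_law_violating_only unfolding violates_only_def by blast

end
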